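(* Let $d\ge3$. For $N\in\mathbb{N}$ let $A_N$ be the number of subgroups $\Lambda\subseteq\mathbb{Z}^d$ of index at most $N$ for which there exist a monic $f\in\mathbb{Z}[X]$ of degree $d$ and an ideal $I\subseteq\mathbb{Z}[X]/(f)$ with $\Lambda=\rho_f(I)$, and let $B_N$ be the number of all subgroups of $\mathbb{Z}^d$ of index at most $N$. Then $A_N/B_N\to0$ as $N\to\infty$.
   Context: For a monic $f\in\mathbb{Z}[X]$ of degree $d$, $\rho_f:\mathbb{Z}[X]/(f)\to\mathbb{Z}^d$ is the group isomorphism sending the class of $\sum_{n=0}^{d-1}a_nX^n$ (representative of degree $<d$) to $(a_0,\dots,a_{d-1})$. *)

theory Defs
  imports Complex_Main "HOL-Computational_Algebra.Polynomial"
begin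

definition Zd :: "nat \<Rightarrow> (nat \<Rightarrow> int) set" where
  "Zd d = {v. \<forall>i\<ge>d. v i = 0}"

definition is_subgroup_Zd :: "nat \<Rightarrow> (nat \<Rightarrow> int) set \<Rightarrow> bool" where
  "is_subgroup_Zd d L \<longleftrightarrow> L \<subseteq> Zd d \<and> (\<lambda>i. 0) \<in> L \<and>
     (\<forall>u\<in>L. \<forall>v\<in>L. (\<lambda>i. u i + v i) \<in> L) \<and> (\<forall>u\<in>L. (\<lambda>i. - u i) \<in> L)"

definition cosets_Zd :: "nat \<Rightarrow> (nat \<Rightarrow> int) set \<Rightarrow> (nat \<Rightarrow> int) set set" where
  "cosets_Zd d L = {(\<lambda>w. (\<lambda>i. v i + w i)) ` L | v. v \<in> Zd d}"

definition index_at_most :: "nat \<Rightarrow> (nat \<Rightarrow> int) set \<Rightarrow> nat \<Rightarrow> bool" where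
  "index_at_most d L N \<longleftrightarrow> finite (cosets_Zd d L) \<and> card (cosets_Zd d L) \<le> N"

definition is_ideal_Zx :: "int poly set \<Rightarrow> bool" where
  "is_ideal_Zx J \<longleftrightarrow> 0 \<in> J \<and> (\<forall>a\<in>J. \<forall>b\<in>J. a + b \<in> J) \<and> (\<forall>a\<in>J. \<forall>r. r * a \<in> J)"

text \<open>Ideals I of Z[X]/(f) correspond to ideals J of Z[X] containing f
  (I = J/(f)). Each class has a unique representative of degree < deg f,
  and rho_f sends it to its coefficient vector; hence
  rho_f(J/(f)) = coefficient vectors of elements of J of degree < deg f.\<close>
definition rho_ideal :: "int poly \<Rightarrow> int poly set \<Rightarrow> (nat \<Rightarrow> int) set" where
  "rho_ideal f J = {(\<lambda>i. coeff p i) | p. p \<in> J \<and> degree p < degree f}"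

definition ideal_lattice :: "nat \<Rightarrow> (nat \<Rightarrow> int) set \<Rightarrow> bool" where
  "ideal_lattice d L \<longleftrightarrow> (\<exists>f J. lead_coeff f = 1 \<and> degree f = d \<and>
      is_ideal_Zx J \<and> f \<in> J \<and> L = rho_ideal f J)"

definition A_count :: "nat \<Rightarrow> nat \<Rightarrow> nat" where
  "A_count d N = card {L. is_subgroup_Zd d L \<and> index_at_most d L N \<and> ideal_lattice d L}"

definition B_count :: "nat \<Rightarrow> nat \<Rightarrow> nat" where
  "B_count d N = card {L. is_subgroup_Zd d L \<and> index_at_most d L N}"

end

(*
  Every subgroup L of finite index in Z^d has a Hermite normal form: the pivot c_k is the least
  positive k-th coordinate of a vector of L vanishing beyond k, the product of the pivots is at
  most the index, and L is determined by its pivots together with rows reduced modulo them.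

  If L = rho_f(I), then L is closed under multiplication by X on vectors with vanishing last
  coordinate. This forces c_(k+1) to divide c_k, and it makes row k+1 a function of rows
  0, ..., k and of k+1 digits in [0, c_k / c_(k+1)); in all there are at most
  c_0 ... c_(d-2) / c_(d-1)^(d-1) <= N choices of digits. As the pivots decrease,
  c_k^(k+1) <= c_0 ... c_k <= N, so there are at most N^(H_d) pivot sequences, where
  H_d = 1 + 1/2 + ... + 1/d <= d - 7/6 for d >= 3. Hence A_N <= N^(d - 1/6).

  On the other hand, the subgroups {v. n | v_0 + a_1 v_1 + ... + a_(d-1) v_(d-1)} with
  N/2 < n <= N and 0 <= a_i < N/2 are pairwise distinct and of index at most n, so
  B_N >= (N/3)^d and A_N / B_N <= 3^d N^(-1/6).
*)
theory Submission
  imports Defs "HOL-Library.FuncSet"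
begin

definition box_Zd :: "nat \<Rightarrow> (nat \<Rightarrow> int set) \<Rightarrow> (nat \<Rightarrow> int) set" where
  "box_Zd d S = {v. (\<forall>i<d. v i \<in> S i) \<and> (\<forall>i\<ge>d. v i = 0)}"

lemma box_Zd_memD: "v \<in> box_Zd d S \<Longrightarrow> i < d \<Longrightarrow> v i \<in> S i"
  unfolding box_Zd_def by blast

lemma bij_betw_restrict_box_Zd: "bij_betw (\<lambda>v. restrict v {..<d}) (box_Zd d S) (PiE {..<d} S)"
  by (rule bij_betw_byWitness[where f' = "\<lambda>w i. if i < d then w i else 0"])
     (auto simp: box_Zd_def PiE_def extensional_def fun_eq_iff)

lemma card_box_Zd: "card (box_Zd d S) = (\<Prod>i<d. card (S i))"
  using bij_betw_same_card[OF bij_betw_restrict_box_Zd] by (simp add: card_PiE)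

lemma finite_box_Zd: "(\<And>i. i < d \<Longrightarrow> finite (S i)) \<Longrightarrow> finite (box_Zd d S)"
  using bij_betw_finite[OF bij_betw_restrict_box_Zd] finite_PiE[of "{..<d}" S] by simp

section \<open>Hermite normal form of subgroups of finite index\<close>

locale subgroup_Zd =
  fixes d :: nat and L :: "(nat \<Rightarrow> int) set"
  assumes subgroup: "is_subgroup_Zd d L"
begin

lemma vanishes: "v \<in> L \<Longrightarrow> d \<le> i \<Longrightarrow> v i = 0"
  using subgroup unfolding is_subgroup_Zd_def Zd_def by blast

lemma zero_mem: "(\<lambda>i. 0) \<in> L"
  and add_mem: "u \<in> L \<Longrightarrow> v \<in> L \<Longrightarrow> (\<lambda>i. u i + v i) \<in> L"
  and uminus_mem: "u \<in> L \<Longrightarrow> (\<lambda>i. - u i) \<in> L"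
  using subgroup unfolding is_subgroup_Zd_def by blast+

lemma diff_mem: "u \<in> L \<Longrightarrow> v \<in> L \<Longrightarrow> (\<lambda>i. u i - v i) \<in> L"
  using add_mem[of u "\<lambda>i. - v i"] uminus_mem[of v] by simp

lemma smult_mem:
  assumes "v \<in> L" shows "(\<lambda>i. t * v i) \<in> L"
proof (induction t rule: int_induct[where k = 0])
  case base show ?case using zero_mem by simp
next
  case (step1 t)
  from add_mem[OF step1.IH assms] show ?case by (simp add: algebra_simps)
next
  case (step2 t)
  from add_mem[OF step2.IH uminus_mem[OF assms]] show ?case by (simp add: algebra_simps)
qed

lemma diff_smult_mem: "u \<in> L \<Longrightarrow> v \<in> L \<Longrightarrow> (\<lambda>i. u i - t * v i) \<in> L"
  using diff_mem smult_mem by blast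

lemma diff_mem_if_cosets_eq:
  assumes "(\<lambda>w i. u i + w i) ` L = (\<lambda>w i. v i + w i) ` L"
  shows "(\<lambda>i. u i - v i) \<in> L"
proof -
  have "u \<in> (\<lambda>w i. u i + w i) ` L" using zero_mem by (rule rev_image_eqI) simp
  then obtain w where "w \<in> L" "u = (\<lambda>i. v i + w i)" using assms by auto
  then show ?thesis by simp
qed

lemma cosets_eq_if_diff_mem:
  assumes "(\<lambda>i. u i - v i) \<in> L"
  shows "(\<lambda>w i. u i + w i) ` L = (\<lambda>w i. v i + w i) ` L"
proof -
  have sub: "(\<lambda>w i. u i + w i) ` L \<subseteq> (\<lambda>w i. v i + w i) ` L"
    if "(\<lambda>i. u i - v i) \<in> L" for u v
  proof (rule image_subsetI)
    fix w assume "w \<in> L"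
    with add_mem[OF that] have "(\<lambda>i. (u i - v i) + w i) \<in> L" .
    then show "(\<lambda>i. u i + w i) \<in> (\<lambda>w i. v i + w i) ` L" by (rule rev_image_eqI) simp
  qed
  have "(\<lambda>i. v i - u i) \<in> L" using uminus_mem[OF assms] by simp
  with sub[OF assms] sub[of v u] show ?thesis by blast
qed

end

locale finite_index_subgroup = subgroup_Zd +
  assumes finite_cosets: "finite (cosets_Zd d L)"
begin

lemma exists_pos_multiple_of_unit_vector:
  assumes k: "k < d"
  shows "\<exists>t>0. (\<lambda>i. if i = k then t else 0) \<in> L"
proof -
  define e where "e = (\<lambda>(j::nat) i. if i = k then int j else 0)"
  define coset where "coset = (\<lambda>j. (\<lambda>w i. e j i + w i) ` L)"
  have "coset ` {0..card (cosets_Zd d L)} \<subseteq> cosets_Zd d L"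
    using k unfolding coset_def cosets_Zd_def Zd_def e_def by auto
  then have "\<not> inj_on coset {0..card (cosets_Zd d L)}"
    using card_inj_on_le[OF _ _ finite_cosets] by force
  then obtain a b where "a \<noteq> b" "coset a = coset b" unfolding inj_on_def by blast
  then obtain a b where "a < b" "coset a = coset b" by (metis linorder_neqE_nat)
  then have "(\<lambda>i. e b i - e a i) \<in> L"
    using diff_mem_if_cosets_eq[of "e b" "e a"] unfolding coset_def by simp
  moreover have "(\<lambda>i. e b i - e a i) = (\<lambda>i. if i = k then int b - int a else 0)"
    unfolding e_def by auto
  ultimately show ?thesis using \<open>a < b\<close> by (intro exI[of _ "int b - int a"]) auto
qed

end

definition pivot :: "(nat \<Rightarrow> int) set \<Rightarrow> nat \<Rightarrow> int" where
  "pivot L k = int (LEAST t::nat. 0 < t \<and> (\<exists>v\<in>L. (\<forall>i>k. v i = 0) \<and> v k = int t))"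

definition hnf_row :: "(nat \<Rightarrow> int) set \<Rightarrow> nat \<Rightarrow> nat \<Rightarrow> int" where
  "hnf_row L k = (SOME v. v \<in> L \<and> (\<forall>i>k. v i = 0) \<and> v k = pivot L k \<and>
     (\<forall>i<k. 0 \<le> v i \<and> v i < pivot L i))"

definition pivot_vector :: "nat \<Rightarrow> (nat \<Rightarrow> int) set \<Rightarrow> nat \<Rightarrow> int" where
  "pivot_vector d L k = (if k < d then pivot L k else 0)"

text \<open>\<open>hnf_member c r k v\<close> decides by back-substitution whether \<open>v\<close> is an integral
  combination of the rows \<open>r 0, ..., r (k - 1)\<close> with pivots \<open>c\<close>.\<close>
primrec hnf_member :: "(nat \<Rightarrow> int) \<Rightarrow> (nat \<Rightarrow> nat \<Rightarrow> int) \<Rightarrow> nat \<Rightarrow> (nat \<Rightarrow> int) \<Rightarrow> bool" where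
  "hnf_member c r 0 v \<longleftrightarrow> (\<forall>i. v i = 0)"
| "hnf_member c r (Suc k) v \<longleftrightarrow>
     c k dvd v k \<and> hnf_member c r k (\<lambda>i. v i - (v k div c k) * r k i)"

lemma hnf_member_cong:
  "(\<And>i. i < n \<Longrightarrow> c i = c' i \<and> r i = r' i) \<Longrightarrow> hnf_member c r n v = hnf_member c' r' n v"
  by (induction n arbitrary: v) auto

lemma eq_if_dvd_mult_diff_and_div_eq:
  fixes m c y y' :: int
  assumes m: "m > 0" and c: "c > 0" and dvd: "c dvd m * (y - y')"
    and div_eq: "y div (c div gcd m c) = y' div (c div gcd m c)"
  shows "y = y'"
proof -
  define g where "g = gcd m c"
  define D where "D = c div g"
  define m' where "m' = m div g"
  have "g > 0" unfolding g_def using m by simp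
  have c_eq: "c = D * g" and m_eq: "m = m' * g" unfolding D_def m'_def g_def by simp_all
  have "D * g dvd (m' * (y - y')) * g"
    using dvd unfolding c_eq m_eq by (simp add: ac_simps)
  then have "D dvd m' * (y - y')" using \<open>g > 0\<close> by simp
  moreover have "coprime D m'"
    using div_gcd_coprime[of c m] c unfolding D_def m'_def g_def by (simp add: gcd.commute)
  ultimately have "D dvd y - y'" using coprime_dvd_mult_right_iff by blast
  then have "y mod D = y' mod D" by (simp add: mod_eq_dvd_iff)
  with div_eq show ?thesis unfolding D_def g_def by (metis div_mult_mod_eq)
qed

context finite_index_subgroup
begin

lemma pivot_exists:
  assumes "k < d"
  shows "\<exists>t::nat. 0 < t \<and> (\<exists>v\<in>L. (\<forall>i>k. v i = 0) \<and> v k = int t)"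
proof -
  obtain t where "t > 0" "(\<lambda>i. if i = k then t else 0) \<in> L"
    using exists_pos_multiple_of_unit_vector[OF assms] by blast
  then show ?thesis
    by (intro exI[of _ "nat t"] conjI bexI[of _ "\<lambda>i. if i = k then t else 0"]) auto
qed

lemma pivot_pos: "k < d \<Longrightarrow> pivot L k > 0"
  and pivot_attained: "k < d \<Longrightarrow> \<exists>v\<in>L. (\<forall>i>k. v i = 0) \<and> v k = pivot L k"
  using LeastI_ex[OF pivot_exists] unfolding pivot_def by auto

lemma pivot_le:
  assumes "v \<in> L" "\<forall>i>k. v i = 0" "v k > 0"
  shows "pivot L k \<le> v k"
proof -
  have "(LEAST t::nat. 0 < t \<and> (\<exists>v\<in>L. (\<forall>i>k. v i = 0) \<and> v k = int t)) \<le> nat (v k)"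
    by (rule Least_le) (use assms in auto)
  then show ?thesis unfolding pivot_def using assms by linarith
qed

lemma pivot_dvd:
  assumes k: "k < d" and v: "v \<in> L" "\<forall>i>k. v i = 0"
  shows "pivot L k dvd v k"
proof -
  obtain r where r: "r \<in> L" "\<forall>i>k. r i = 0" "r k = pivot L k"
    using pivot_attained[OF k] by blast
  define w where "w = (\<lambda>i. v i - (v k div pivot L k) * r i)"
  have w: "w \<in> L" "\<forall>i>k. w i = 0" unfolding w_def using diff_smult_mem r v by auto
  have wk: "w k = v k mod pivot L k"
    unfolding w_def r(3) by (simp add: minus_div_mult_eq_mod[symmetric] algebra_simps)
  then have "w k < pivot L k" using pivot_pos[OF k] by simp
  then have "\<not> w k > 0" using pivot_le[OF w] by force
  moreover have "w k \<ge> 0" using wk pivot_pos[OF k] by simp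
  ultimately show ?thesis using wk by (simp add: dvd_eq_mod_eq_0)
qed

lemma exists_reduction:
  "n \<le> d \<Longrightarrow> \<exists>u\<in>L. (\<forall>i\<ge>n. u i = 0) \<and> (\<forall>i<n. 0 \<le> v i - u i \<and> v i - u i < pivot L i)"
proof (induction n arbitrary: v)
  case 0
  then show ?case using zero_mem by auto
next
  case (Suc n)
  then have n: "n < d" by simp
  obtain r where r: "r \<in> L" "\<forall>i>n. r i = 0" "r n = pivot L n"
    using pivot_attained[OF n] by blast
  define t where "t = v n div pivot L n"
  obtain u where u: "u \<in> L" "\<forall>i\<ge>n. u i = 0"
    "\<forall>i<n. 0 \<le> (v i - t * r i) - u i \<and> (v i - t * r i) - u i < pivot L i"
    using Suc.IH[of "\<lambda>i. v i - t * r i"] n by auto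
  have "v n - t * r n = v n mod pivot L n"
    unfolding t_def r(3) by (simp add: minus_div_mult_eq_mod[symmetric] algebra_simps)
  then have "0 \<le> v n - t * r n \<and> v n - t * r n < pivot L n"
    using pivot_pos[OF n] by simp
  show ?case
  proof (intro bexI conjI)
    show "(\<lambda>i. u i + t * r i) \<in> L" using add_mem[OF u(1) smult_mem[OF r(1)]] .
    show "\<forall>i\<ge>Suc n. u i + t * r i = 0" using u(2) r(2) by simp
    show "\<forall>i<Suc n. 0 \<le> v i - (u i + t * r i) \<and> v i - (u i + t * r i) < pivot L i"
      using u(2,3) \<open>0 \<le> v n - t * r n \<and> v n - t * r n < pivot L n\<close>
      by (auto simp: less_Suc_eq)
  qed
qed

lemma hnf_row_exists:
  assumes k: "k < d"
  shows "\<exists>v. v \<in> L \<and> (\<forall>i>k. v i = 0) \<and> v k = pivot L k \<and> (\<forall>i<k. 0 \<le> v i \<and> v i < pivot L i)"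
proof -
  obtain r where r: "r \<in> L" "\<forall>i>k. r i = 0" "r k = pivot L k"
    using pivot_attained[OF k] by blast
  obtain u where u: "u \<in> L" "\<forall>i\<ge>k. u i = 0" "\<forall>i<k. 0 \<le> r i - u i \<and> r i - u i < pivot L i"
    using exists_reduction[of k r] k by auto
  show ?thesis
    by (rule exI[of _ "\<lambda>i. r i - u i"]) (use diff_mem[OF r(1) u(1)] r u in auto)
qed

lemma hnf_row:
  assumes "k < d"
  shows "hnf_row L k \<in> L" "\<forall>i>k. hnf_row L k i = 0" "hnf_row L k k = pivot L k"
    "\<forall>i<k. 0 \<le> hnf_row L k i \<and> hnf_row L k i < pivot L i"
  using someI_ex[OF hnf_row_exists[OF assms]] unfolding hnf_row_def by auto

lemma eq_if_mult_diff_mem: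
  assumes "n \<le> d" "m > 0" "(\<lambda>i. m * (y i - y' i)) \<in> L" "\<forall>i\<ge>n. y i = y' i"
    "\<forall>i<n. y i div (pivot L i div gcd m (pivot L i)) = y' i div (pivot L i div gcd m (pivot L i))"
  shows "y = y'"
  using assms
proof (induction n)
  case 0
  then show ?case by auto
next
  case (Suc n)
  then have n: "n < d" by simp
  have dvd: "pivot L n dvd m * (y n - y' n)"
    using pivot_dvd[OF n Suc.prems(3)] Suc.prems(4) by simp
  have "y n div (pivot L n div gcd m (pivot L n)) = y' n div (pivot L n div gcd m (pivot L n))"
    using Suc.prems(5) by simp
  with dvd have yn: "y n = y' n"
    using eq_if_dvd_mult_diff_and_div_eq[OF Suc.prems(2) pivot_pos[OF n]] by blast
  have "\<forall>i\<ge>n. y i = y' i"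
  proof (intro allI impI)
    fix i assume "n \<le> i"
    then consider "i = n" | "Suc n \<le> i" by linarith
    then show "y i = y' i" using yn Suc.prems(4) by cases simp_all
  qed
  then show ?case using Suc.IH[OF _ Suc.prems(2,3)] Suc.prems(5) n by simp
qed

lemma mem_iff_hnf_member:
  "n \<le> d \<Longrightarrow> \<forall>i\<ge>n. v i = 0 \<Longrightarrow> v \<in> L \<longleftrightarrow> hnf_member (pivot L) (hnf_row L) n v"
proof (induction n arbitrary: v)
  case 0
  then have "v = (\<lambda>i. 0)" by (simp add: fun_eq_iff)
  then show ?case using zero_mem by simp
next
  case (Suc n)
  then have n: "n < d" by simp
  define t where "t = v n div pivot L n"
  define v' where "v' = (\<lambda>i. v i - t * hnf_row L n i)"
  have v_eq: "v = (\<lambda>i. v' i + t * hnf_row L n i)" unfolding v'_def by simp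
  have "\<forall>i\<ge>n. v' i = 0" if "pivot L n dvd v n"
  proof (intro allI impI)
    fix i assume "n \<le> i"
    then consider "i = n" | "Suc n \<le> i" by linarith
    then show "v' i = 0"
    proof cases
      case 1
      then show ?thesis using that hnf_row(3)[OF n] unfolding v'_def t_def by simp
    next
      case 2
      then show ?thesis using Suc.prems(2) hnf_row(2)[OF n] unfolding v'_def by simp
    qed
  qed
  then have "pivot L n dvd v n \<Longrightarrow> v' \<in> L \<longleftrightarrow> hnf_member (pivot L) (hnf_row L) n v'"
    using Suc.IH[of v'] n by simp
  moreover have "hnf_member (pivot L) (hnf_row L) (Suc n) v \<longleftrightarrow>
      pivot L n dvd v n \<and> hnf_member (pivot L) (hnf_row L) n v'"
    unfolding v'_def t_def by simp
  moreover have "v \<in> L \<longleftrightarrow> v' \<in> L"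
  proof
    show "v' \<in> L" if "v \<in> L"
      using diff_smult_mem[OF that hnf_row(1)[OF n]] unfolding v'_def .
    show "v \<in> L" if "v' \<in> L"
      using add_mem[OF that smult_mem[OF hnf_row(1)[OF n]]] by (subst v_eq)
  qed
  moreover have "v \<in> L \<Longrightarrow> pivot L n dvd v n"
    using pivot_dvd[OF n] Suc.prems(2) by (simp add: Suc_le_eq)
  ultimately show ?case by blast
qed

lemma prod_pivot_le_card_cosets: "(\<Prod>i<d. pivot L i) \<le> int (card (cosets_Zd d L))"
proof -
  define R where "R = box_Zd d (\<lambda>i. {0..<pivot L i})"
  define coset where "coset = (\<lambda>v. (\<lambda>w i. v i + w i) ` L)"
  have "inj_on coset R"
  proof
    fix u v assume u: "u \<in> R" and v: "v \<in> R" and "coset u = coset v"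
    then have "(\<lambda>i. 1 * (u i - v i)) \<in> L"
      using diff_mem_if_cosets_eq unfolding coset_def by simp
    moreover have "\<forall>i\<ge>d. u i = v i" using u v unfolding R_def box_Zd_def by simp
    moreover have "\<forall>i<d. u i div pivot L i = v i div pivot L i"
      using u v unfolding R_def box_Zd_def by (simp add: div_pos_pos_trivial)
    ultimately show "u = v" using eq_if_mult_diff_mem[of d 1 u v] by simp
  qed
  moreover have "coset ` R \<subseteq> cosets_Zd d L"
    unfolding R_def coset_def cosets_Zd_def box_Zd_def Zd_def by blast
  ultimately have "card R \<le> card (cosets_Zd d L)"
    using card_inj_on_le finite_cosets by blast
  moreover have "int (card R) = (\<Prod>i<d. pivot L i)"
    unfolding R_def card_box_Zd of_nat_prod
    by (rule prod.cong) (simp_all add: less_imp_le pivot_pos)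
  ultimately show ?thesis by linarith
qed

lemma pivot_le_card_cosets:
  assumes "k < d"
  shows "pivot L k \<le> int (card (cosets_Zd d L))"
proof -
  have "pivot L k \<le> (\<Prod>i<d. pivot L i)"
    using prod_mono2[of "{..<d}" "{k}" "pivot L"] assms pivot_pos by fastforce
  then show ?thesis using prod_pivot_le_card_cosets by linarith
qed

end

lemma mem_iff_mem_if_hnf_agree:
  assumes "finite_index_subgroup d L" "finite_index_subgroup d L'" "n \<le> d"
    and agree: "\<forall>i<n. pivot L i = pivot L' i \<and> hnf_row L i = hnf_row L' i"
    and "\<forall>i\<ge>n. v i = 0"
  shows "v \<in> L \<longleftrightarrow> v \<in> L'"
proof -
  interpret L: finite_index_subgroup d L by fact
  interpret L': finite_index_subgroup d L' by fact
  have "hnf_member (pivot L) (hnf_row L) n v = hnf_member (pivot L') (hnf_row L') n v"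
    by (rule hnf_member_cong) (use agree in blast)
  then show ?thesis using L.mem_iff_hnf_member L'.mem_iff_hnf_member assms(3,5) by simp
qed

lemma eq_if_hnf_agree:
  assumes L: "finite_index_subgroup d L" and L': "finite_index_subgroup d L'"
    and agree: "\<forall>i<d. pivot L i = pivot L' i \<and> hnf_row L i = hnf_row L' i"
  shows "L = L'"
proof (intro set_eqI)
  interpret L: finite_index_subgroup d L by fact
  interpret L': finite_index_subgroup d L' by fact
  fix v
  have "v \<in> L \<Longrightarrow> \<forall>i\<ge>d. v i = 0" "v \<in> L' \<Longrightarrow> \<forall>i\<ge>d. v i = 0"
    using L.vanishes L'.vanishes by blast+
  then show "v \<in> L \<longleftrightarrow> v \<in> L'"
    using mem_iff_mem_if_hnf_agree[OF L L' order_refl agree] by blast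
qed

section \<open>Ideal lattices are closed under the shift\<close>

definition shift_Zd :: "(nat \<Rightarrow> int) \<Rightarrow> nat \<Rightarrow> int" where
  "shift_Zd v i = (if i = 0 then 0 else v (i - 1))"

text \<open>On coefficient vectors \<open>shift_Zd\<close> is multiplication by \<open>X\<close>; it stays inside
  \<open>\<rho>\<^sub>f(I)\<close> as long as no reduction modulo \<open>f\<close> is needed.\<close>
lemma ideal_lattice_shift_closed:
  assumes "ideal_lattice d L" "v \<in> L" "v (d - 1) = 0"
  shows "shift_Zd v \<in> L"
proof -
  obtain f J where f: "degree f = d" and J: "is_ideal_Zx J" and L: "L = rho_ideal f J"
    using assms(1) unfolding ideal_lattice_def by blast
  obtain p where p: "v = (\<lambda>i. coeff p i)" "p \<in> J" "degree p < d"
    using assms(2) f unfolding L rho_ideal_def by blast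
  have "[:0, 1:] * p \<in> J" using J p(2) unfolding is_ideal_Zx_def by blast
  then have "pCons 0 p \<in> J" by simp
  moreover have "degree (pCons 0 p) < d"
  proof -
    have "coeff (pCons 0 p) i = 0" if large: "d - 1 < i" for i
    proof -
      obtain j where i: "i = Suc j" using large by (cases i) auto
      show ?thesis
      proof (cases "j = d - 1")
        case True
        then show ?thesis using assms(3) p(1) i by simp
      next
        case False
        then have "degree p < j" using large p(3) i by linarith
        then show ?thesis using i by (simp add: coeff_eq_0)
      qed
    qed
    then have "degree (pCons 0 p) \<le> d - 1" by (intro degree_le) blast
    then show ?thesis using p(3) by linarith
  qed
  moreover have "shift_Zd v = (\<lambda>i. coeff (pCons 0 p) i)"
    unfolding p(1) shift_Zd_def by (simp add: fun_eq_iff coeff_pCons split: nat.split)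
  ultimately show ?thesis
    unfolding L rho_ideal_def f by (intro CollectI exI[of _ "pCons 0 p"]) simp
qed

locale shift_closed_subgroup = finite_index_subgroup +
  assumes shift_closed: "v \<in> L \<Longrightarrow> v (d - 1) = 0 \<Longrightarrow> shift_Zd v \<in> L"

definition pivot_ratio :: "(nat \<Rightarrow> int) set \<Rightarrow> nat \<Rightarrow> int" where
  "pivot_ratio L k = pivot L k div pivot L (Suc k)"

text \<open>Since \<open>pivot_ratio L k * hnf_row L (Suc k) - shift_Zd (hnf_row L k)\<close> lies in \<open>L\<close>,
  the \<open>i\<close>-th entry of \<open>hnf_row L (Suc k)\<close> is determined modulo
  \<open>pivot L i div gcd (pivot_ratio L k) (pivot L i)\<close> by the rows \<open>0, ..., k\<close> and its entries
  above \<open>i\<close>; only the quotient by this modulus is free, and it is less than \<open>pivot_ratio L k\<close>.\<close>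
definition hnf_digit :: "(nat \<Rightarrow> int) set \<Rightarrow> nat \<Rightarrow> nat \<Rightarrow> int" where
  "hnf_digit L k i = hnf_row L (Suc k) i div (pivot L i div gcd (pivot_ratio L k) (pivot L i))"

definition digit_positions :: "nat \<Rightarrow> (nat \<times> nat) set" where
  "digit_positions d = Sigma {..<d - 1} (\<lambda>k. {..k})"

definition digit_table :: "nat \<Rightarrow> (nat \<Rightarrow> int) set \<Rightarrow> nat \<times> nat \<Rightarrow> int" where
  "digit_table d L = restrict (\<lambda>(k, i). hnf_digit L k i) (digit_positions d)"

context shift_closed_subgroup
begin

lemma shift_hnf_row:
  assumes "Suc k < d"
  shows "shift_Zd (hnf_row L k) \<in> L" "\<forall>i>Suc k. shift_Zd (hnf_row L k) i = 0"
    "shift_Zd (hnf_row L k) (Suc k) = pivot L k"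
proof -
  have k: "k < d" using assms by simp
  show "shift_Zd (hnf_row L k) \<in> L"
    using shift_closed hnf_row(1,2)[OF k] assms by simp
  show "\<forall>i>Suc k. shift_Zd (hnf_row L k) i = 0" "shift_Zd (hnf_row L k) (Suc k) = pivot L k"
    using hnf_row(2,3)[OF k] unfolding shift_Zd_def by simp_all
qed

lemma pivot_Suc_dvd: "Suc k < d \<Longrightarrow> pivot L (Suc k) dvd pivot L k"
  using pivot_dvd[of "Suc k" "shift_Zd (hnf_row L k)"] shift_hnf_row by simp

lemma pivot_ratio_mult: "Suc k < d \<Longrightarrow> pivot_ratio L k * pivot L (Suc k) = pivot L k"
  unfolding pivot_ratio_def using pivot_Suc_dvd by simp

lemma pivot_ratio_pos:
  assumes "Suc k < d"
  shows "pivot_ratio L k > 0"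
proof -
  have "0 < pivot_ratio L k * pivot L (Suc k)"
    using pivot_ratio_mult[OF assms] pivot_pos[of k] assms by simp
  then show ?thesis using pivot_pos[OF assms] by (simp add: zero_less_mult_iff)
qed

lemma hnf_digit_bounds:
  assumes k: "Suc k < d" and i: "i \<le> k"
  shows "0 \<le> hnf_digit L k i \<and> hnf_digit L k i < pivot_ratio L k"
proof -
  define y where "y = hnf_row L (Suc k) i"
  define g where "g = gcd (pivot_ratio L k) (pivot L i)"
  define D where "D = pivot L i div g"
  have "g > 0" "g \<le> pivot_ratio L k"
    unfolding g_def using pivot_ratio_pos[OF k] by (simp_all add: zdvd_imp_le)
  have "pivot L i = D * g" unfolding D_def g_def by simp
  moreover have "pivot L i > 0" using pivot_pos k i by simp
  ultimately have "D > 0" using \<open>g > 0\<close> by (simp add: zero_less_mult_iff)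
  have "0 \<le> y" "y < D * g"
    using hnf_row(4)[OF k, rule_format, of i] i \<open>pivot L i = D * g\<close> unfolding y_def by auto
  have "y div D * D \<le> y" using div_mult_mod_eq[of y D] pos_mod_sign[OF \<open>D > 0\<close>, of y] by linarith
  then have "y div D * D < g * D" using \<open>y < D * g\<close> by (simp add: mult.commute)
  then have "y div D < g" using \<open>D > 0\<close> by (simp add: mult_less_cancel_right_pos)
  moreover have "0 \<le> y div D" using \<open>0 \<le> y\<close> \<open>D > 0\<close> by (simp add: pos_imp_zdiv_nonneg_iff)
  ultimately show ?thesis
    using \<open>g \<le> pivot_ratio L k\<close> unfolding hnf_digit_def y_def D_def g_def by simp
qed

lemma pivot_ratio_row_diff_shift:
  assumes "Suc k < d"
  shows "(\<lambda>i. pivot_ratio L k * hnf_row L (Suc k) i - shift_Zd (hnf_row L k) i) \<in> L"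
    "\<forall>i\<ge>Suc k. pivot_ratio L k * hnf_row L (Suc k) i - shift_Zd (hnf_row L k) i = 0"
proof -
  show "(\<lambda>i. pivot_ratio L k * hnf_row L (Suc k) i - shift_Zd (hnf_row L k) i) \<in> L"
    using diff_mem[OF smult_mem[OF hnf_row(1)[OF assms]] shift_hnf_row(1)[OF assms]] .
  show "\<forall>i\<ge>Suc k. pivot_ratio L k * hnf_row L (Suc k) i - shift_Zd (hnf_row L k) i = 0"
    using hnf_row(2,3)[OF assms] shift_hnf_row(2,3)[OF assms] pivot_ratio_mult[OF assms]
    by (auto simp: le_less)
qed

end

lemma ideal_lattice_imp_shift_closed_subgroup:
  assumes "is_subgroup_Zd d L" "finite (cosets_Zd d L)" "ideal_lattice d L"
  shows "shift_closed_subgroup d L"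
  using assms ideal_lattice_shift_closed
  by (intro shift_closed_subgroup.intro finite_index_subgroup.intro subgroup_Zd.intro
      finite_index_subgroup_axioms.intro shift_closed_subgroup_axioms.intro)

text \<open>\<open>L\<close> and \<open>L'\<close> contain the same vectors vanishing from index \<open>Suc k\<close> on, such as
  \<open>m * hnf_row L' (Suc k) - shift_Zd (hnf_row L k)\<close>; hence \<open>m\<close> times the difference of the
  two rows lies in \<open>L\<close>.\<close>
lemma hnf_row_Suc_eq_if_digits_eq:
  assumes L: "shift_closed_subgroup d L" and L': "shift_closed_subgroup d L'" and k: "Suc k < d"
    and pivots: "\<forall>i\<le>Suc k. pivot L i = pivot L' i"
    and rows: "\<forall>i\<le>k. hnf_row L i = hnf_row L' i"
    and digits: "\<forall>i\<le>k. hnf_digit L k i = hnf_digit L' k i"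
  shows "hnf_row L (Suc k) = hnf_row L' (Suc k)"
proof -
  interpret L: shift_closed_subgroup d L by fact
  interpret L': shift_closed_subgroup d L' by fact
  define m where "m = pivot_ratio L k"
  have m': "pivot_ratio L' k = m" using pivots unfolding m_def pivot_ratio_def by simp
  define z' where "z' = (\<lambda>i. m * hnf_row L' (Suc k) i - shift_Zd (hnf_row L k) i)"
  have "z' \<in> L'" "\<forall>i\<ge>Suc k. z' i = 0"
    using L'.pivot_ratio_row_diff_shift[OF k] m' rows unfolding z'_def by simp_all
  moreover have "\<forall>i<Suc k. pivot L' i = pivot L i \<and> hnf_row L' i = hnf_row L i"
    using pivots rows by simp
  ultimately have "z' \<in> L"
    using mem_iff_mem_if_hnf_agree[of d L' L "Suc k" z'] k
      L'.finite_index_subgroup_axioms L.finite_index_subgroup_axioms by simp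
  from L.diff_mem[OF L.pivot_ratio_row_diff_shift(1)[OF k] this]
  have "(\<lambda>i. m * (hnf_row L (Suc k) i - hnf_row L' (Suc k) i)) \<in> L"
    unfolding z'_def m_def by (simp add: algebra_simps)
  moreover have "\<forall>i\<ge>Suc k. hnf_row L (Suc k) i = hnf_row L' (Suc k) i"
    using L.hnf_row(2,3)[OF k] L'.hnf_row(2,3)[OF k] pivots by (auto simp: le_less)
  moreover have "\<forall>i<Suc k. hnf_row L (Suc k) i div (pivot L i div gcd m (pivot L i)) =
      hnf_row L' (Suc k) i div (pivot L i div gcd m (pivot L i))"
    using digits pivots m' unfolding hnf_digit_def m_def by simp
  ultimately show ?thesis
    using L.eq_if_mult_diff_mem[of "Suc k" m] k L.pivot_ratio_pos[OF k] unfolding m_def by simp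
qed

lemma hnf_rows_eq_if_digits_eq:
  assumes L: "shift_closed_subgroup d L" and L': "shift_closed_subgroup d L'"
    and pivots: "\<forall>i<d. pivot L i = pivot L' i"
    and digits: "\<forall>k i. Suc k < d \<longrightarrow> i \<le> k \<longrightarrow> hnf_digit L k i = hnf_digit L' k i"
  shows "k < d \<Longrightarrow> \<forall>j\<le>k. hnf_row L j = hnf_row L' j"
proof (induction k)
  case 0
  interpret L: shift_closed_subgroup d L by fact
  interpret L': shift_closed_subgroup d L' by fact
  have "hnf_row L 0 i = hnf_row L' 0 i" for i
    using L.hnf_row(2,3)[OF 0] L'.hnf_row(2,3)[OF 0] pivots 0 by (cases i) simp_all
  then show ?case by auto
next
  case (Suc k)
  then have "hnf_row L (Suc k) = hnf_row L' (Suc k)"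
    using hnf_row_Suc_eq_if_digits_eq[OF L L'] pivots digits by simp
  with Suc show ?case by (auto simp: le_Suc_eq)
qed

lemma shift_closed_subgroup_eqI:
  assumes L: "shift_closed_subgroup d L" and L': "shift_closed_subgroup d L'"
    and pivots: "pivot_vector d L = pivot_vector d L'"
    and digits: "digit_table d L = digit_table d L'"
  shows "L = L'"
proof (rule eq_if_hnf_agree)
  show "finite_index_subgroup d L" "finite_index_subgroup d L'"
    using L L' shift_closed_subgroup_def by blast+
  have "\<forall>i<d. pivot L i = pivot L' i"
  proof (intro allI impI)
    fix i assume "i < d"
    then show "pivot L i = pivot L' i" using fun_cong[OF pivots, of i] unfolding pivot_vector_def by simp
  qed
  moreover have "\<forall>k i. Suc k < d \<longrightarrow> i \<le> k \<longrightarrow> hnf_digit L k i = hnf_digit L' k i"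
  proof (intro allI impI)
    fix k i assume "Suc k < d" "i \<le> k"
    then have "(k, i) \<in> digit_positions d" unfolding digit_positions_def by simp
    then show "hnf_digit L k i = hnf_digit L' k i"
      using fun_cong[OF digits, of "(k, i)"] unfolding digit_table_def by simp
  qed
  ultimately show "\<forall>i<d. pivot L i = pivot L' i \<and> hnf_row L i = hnf_row L' i"
    using hnf_rows_eq_if_digits_eq[OF L L'] by blast
qed

section \<open>Counting ideal lattices\<close>

definition pivot_chains :: "nat \<Rightarrow> nat \<Rightarrow> (nat \<Rightarrow> int) set" where
  "pivot_chains d N = {c. (\<forall>k<d. 1 \<le> c k) \<and> (\<forall>k\<ge>d. c k = 0) \<and>
     (\<forall>k. Suc k < d \<longrightarrow> c (Suc k) dvd c k) \<and> (\<Prod>k<d. c k) \<le> int N}"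

definition digit_tables :: "nat \<Rightarrow> (nat \<Rightarrow> int) \<Rightarrow> (nat \<times> nat \<Rightarrow> int) set" where
  "digit_tables d c = PiE (digit_positions d) (\<lambda>(k, i). {0..<c k div c (Suc k)})"

lemma prod_ratio_powers_telescope:
  fixes c :: "nat \<Rightarrow> int"
  assumes "\<forall>k<n. c (Suc k) dvd c k"
  shows "(\<Prod>k<n. (c k div c (Suc k)) ^ Suc k) * c n ^ n = (\<Prod>k<n. c k)"
  using assms
proof (induction n)
  case 0
  then show ?case by simp
next
  case (Suc n)
  have "(\<Prod>k<Suc n. (c k div c (Suc k)) ^ Suc k) * c (Suc n) ^ Suc n
      = (\<Prod>k<n. (c k div c (Suc k)) ^ Suc k) * (c n div c (Suc n) * c (Suc n)) ^ Suc n"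
    by (simp add: power_mult_distrib)
  also have "c n div c (Suc n) * c (Suc n) = c n" using Suc.prems by simp
  also have "(\<Prod>k<n. (c k div c (Suc k)) ^ Suc k) * c n ^ Suc n
      = ((\<Prod>k<n. (c k div c (Suc k)) ^ Suc k) * c n ^ n) * c n"
    by (simp add: algebra_simps)
  also have "\<dots> = (\<Prod>k<Suc n. c k)" using Suc by simp
  finally show ?case .
qed

lemma finite_digit_tables: "finite (digit_tables d c)"
  unfolding digit_tables_def digit_positions_def by (auto intro!: finite_PiE)

lemma card_digit_tables_le:
  assumes c: "c \<in> pivot_chains d N"
  shows "card (digit_tables d c) \<le> N"
proof -
  have pos: "\<And>k. k < d \<Longrightarrow> 1 \<le> c k" and dvd: "\<forall>k<d - 1. c (Suc k) dvd c k"
    using c unfolding pivot_chains_def by auto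
  have ratio_nonneg: "0 \<le> c k div c (Suc k)" if "k < d - 1" for k
  proof -
    have "1 \<le> c k" "1 \<le> c (Suc k)" using pos that by auto
    then show ?thesis by (simp add: pos_imp_zdiv_nonneg_iff)
  qed
  have "int (card (digit_tables d c)) = (\<Prod>(k, i)\<in>digit_positions d. c k div c (Suc k))"
    unfolding digit_tables_def digit_positions_def
    by (subst card_PiE) (auto simp: of_nat_prod ratio_nonneg intro!: prod.cong)
  also have "\<dots> = (\<Prod>k<d - 1. (c k div c (Suc k)) ^ Suc k)"
    unfolding digit_positions_def by (subst prod.Sigma[symmetric]) auto
  also have "\<dots> \<le> (\<Prod>k<d - 1. (c k div c (Suc k)) ^ Suc k) * c (d - 1) ^ (d - 1)"
  proof -
    have "0 \<le> (\<Prod>k<d - 1. (c k div c (Suc k)) ^ Suc k)"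
      using ratio_nonneg by (intro prod_nonneg zero_le_power) simp
    moreover have "1 \<le> c (d - 1) ^ (d - 1)"
      using pos[of "d - 1"] by (cases d) simp_all
    ultimately show ?thesis by (simp add: mult_le_cancel_left1)
  qed
  also have "\<dots> = (\<Prod>k<d - 1. c k)"
    using prod_ratio_powers_telescope dvd by blast
  also have "\<dots> \<le> (\<Prod>k<d. c k)"
    using pos by (intro prod_mono2) (auto intro: order_trans[OF zero_le_one])
  also have "\<dots> \<le> int N" using c unfolding pivot_chains_def by simp
  finally show ?thesis by simp
qed

lemma pivot_chain_antimono:
  assumes c: "c \<in> pivot_chains d N" and "i \<le> j" "j < d"
  shows "c j \<le> c i"
  using assms(2,3)
proof (induction j)
  case 0
  then show ?case by simp
next
  case (Suc j)
  have "c (Suc j) dvd c j" "1 \<le> c j"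
    using c Suc.prems unfolding pivot_chains_def by simp_all
  then have "c (Suc j) \<le> c j" by (simp add: zdvd_imp_le)
  then show ?case using Suc by (cases "i = Suc j") simp_all
qed

lemma pivot_chain_power_le:
  assumes c: "c \<in> pivot_chains d N" and k: "k < d"
  shows "c k ^ Suc k \<le> int N"
proof -
  have pos: "\<And>i. i < d \<Longrightarrow> 1 \<le> c i" using c unfolding pivot_chains_def by simp
  have "c k ^ Suc k = (\<Prod>i\<le>k. c k)" by simp
  also have "\<dots> \<le> (\<Prod>i\<le>k. c i)"
    using pos k pivot_chain_antimono[OF c] by (intro prod_mono) fastforce
  also have "\<dots> \<le> (\<Prod>i<d. c i)"
    using pos k by (intro prod_mono2) (auto intro: order_trans[OF zero_le_one])
  also have "\<dots> \<le> int N" using c unfolding pivot_chains_def by simp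
  finally show ?thesis .
qed

lemma card_int_power_le:
  assumes "n > 0"
  shows "real (card {t::int. 1 \<le> t \<and> t ^ n \<le> int N}) \<le> real N powr (1 / real n)"
proof -
  define K where "K = \<lfloor>root n (real N)\<rfloor>"
  have "{t::int. 1 \<le> t \<and> t ^ n \<le> int N} \<subseteq> {1..K}"
  proof
    fix t :: int assume "t \<in> {t. 1 \<le> t \<and> t ^ n \<le> int N}"
    then have t: "1 \<le> t" "real_of_int t ^ n \<le> real N" by (auto simp flip: of_int_power)
    have "real_of_int t = root n (real_of_int t ^ n)"
      using assms t(1) by (simp add: real_root_power_cancel)
    also have "\<dots> \<le> root n (real N)" using assms t(2) by (rule real_root_le_mono)
    finally have "t \<le> K" unfolding K_def by (simp add: le_floor_iff)
    then show "t \<in> {1..K}" using t(1) by simp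
  qed
  then have "card {t::int. 1 \<le> t \<and> t ^ n \<le> int N} \<le> nat K"
    using card_mono[of "{1..K}"] by fastforce
  moreover have "real (nat K) \<le> root n (real N)"
    unfolding K_def using real_root_ge_zero[of "real N" n] by linarith
  moreover have "root n (real N) = real N powr (1 / real n)"
    using assms by (cases "N = 0") (simp_all add: root_powr_inverse)
  ultimately show ?thesis by linarith
qed

lemma pivot_chains_subset_box:
  "pivot_chains d N \<subseteq> box_Zd d (\<lambda>k. {t. 1 \<le> t \<and> t ^ Suc k \<le> int N})"
proof
  fix c assume c: "c \<in> pivot_chains d N"
  then have "\<forall>k<d. 1 \<le> c k" "\<forall>k\<ge>d. c k = 0" unfolding pivot_chains_def by simp_all
  then show "c \<in> box_Zd d (\<lambda>k. {t. 1 \<le> t \<and> t ^ Suc k \<le> int N})"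
    unfolding box_Zd_def using pivot_chain_power_le[OF c] by simp
qed

lemma finite_int_power_le: "finite {t::int. 1 \<le> t \<and> t ^ Suc k \<le> int N}"
proof (rule finite_subset)
  show "{t. 1 \<le> t \<and> t ^ Suc k \<le> int N} \<subseteq> {1..int N}"
  proof
    fix t :: int assume "t \<in> {t. 1 \<le> t \<and> t ^ Suc k \<le> int N}"
    then have "1 \<le> t" "t ^ Suc k \<le> int N" by simp_all
    moreover have "t \<le> t ^ Suc k" using self_le_power[OF \<open>1 \<le> t\<close> zero_less_Suc] .
    ultimately have "t \<le> int N" by linarith
    with \<open>1 \<le> t\<close> show "t \<in> {1..int N}" by simp
  qed
qed simp

lemma finite_pivot_chains: "finite (pivot_chains d N)"
  using finite_subset[OF pivot_chains_subset_box finite_box_Zd[OF finite_int_power_le]] .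

lemma card_pivot_chains_le:
  assumes "N > 0"
  shows "real (card (pivot_chains d N)) \<le> real N powr (\<Sum>k<d. 1 / real (Suc k))"
proof -
  have "card (pivot_chains d N) \<le> card (box_Zd d (\<lambda>k. {t. 1 \<le> t \<and> t ^ Suc k \<le> int N}))"
    by (rule card_mono[OF finite_box_Zd[OF finite_int_power_le] pivot_chains_subset_box])
  then have "real (card (pivot_chains d N))
      \<le> (\<Prod>k<d. real (card {t::int. 1 \<le> t \<and> t ^ Suc k \<le> int N}))"
    unfolding card_box_Zd by (simp flip: of_nat_prod)
  also have "\<dots> \<le> (\<Prod>k<d. real N powr (1 / real (Suc k)))"
    by (intro prod_mono conjI card_int_power_le) simp_all
  also have "\<dots> = real N powr (\<Sum>k<d. 1 / real (Suc k))"
    using assms by (simp add: powr_sum)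
  finally show ?thesis .
qed

context shift_closed_subgroup
begin

lemma pivot_vector_mem_pivot_chains:
  assumes "card (cosets_Zd d L) \<le> N"
  shows "pivot_vector d L \<in> pivot_chains d N"
proof -
  have "(\<Prod>k<d. pivot_vector d L k) = (\<Prod>k<d. pivot L k)"
    unfolding pivot_vector_def by simp
  then have "(\<Prod>k<d. pivot_vector d L k) \<le> int N"
    using prod_pivot_le_card_cosets assms by linarith
  moreover have "\<forall>k<d. 1 \<le> pivot_vector d L k"
    unfolding pivot_vector_def using pivot_pos by (simp add: int_one_le_iff_zero_less)
  moreover have "\<forall>k. Suc k < d \<longrightarrow> pivot_vector d L (Suc k) dvd pivot_vector d L k"
    unfolding pivot_vector_def using pivot_Suc_dvd by simp
  ultimately show ?thesis unfolding pivot_chains_def pivot_vector_def by simp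
qed

lemma digit_table_mem_digit_tables: "digit_table d L \<in> digit_tables d (pivot_vector d L)"
  unfolding digit_tables_def digit_table_def
proof (rule restrict_PiE_iff[THEN iffD2], intro ballI)
  fix p assume "p \<in> digit_positions d"
  then obtain k i where p: "p = (k, i)" "Suc k < d" "i \<le> k"
    unfolding digit_positions_def by auto
  then have "pivot_vector d L k div pivot_vector d L (Suc k) = pivot_ratio L k"
    unfolding pivot_vector_def pivot_ratio_def by simp
  then show "(\<lambda>(k, i). hnf_digit L k i) p \<in> (\<lambda>(k, i). {0..<pivot_vector d L k div pivot_vector d L (Suc k)}) p"
    using hnf_digit_bounds[OF p(2,3)] p(1) by simp
qed

end

lemma A_count_le: "A_count d N \<le> card (pivot_chains d N) * N"
proof -
  define S where "S = {L. is_subgroup_Zd d L \<and> index_at_most d L N \<and> ideal_lattice d L}"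
  define code where "code L = (pivot_vector d L, digit_table d L)" for L
  have closed: "shift_closed_subgroup d L" if "L \<in> S" for L
    using that ideal_lattice_imp_shift_closed_subgroup unfolding S_def index_at_most_def by blast
  have "inj_on code S"
    using shift_closed_subgroup_eqI[OF closed closed] unfolding code_def inj_on_def by blast
  moreover have "code ` S \<subseteq> Sigma (pivot_chains d N) (digit_tables d)"
  proof (rule image_subsetI)
    fix L assume "L \<in> S"
    then interpret shift_closed_subgroup d L by (rule closed)
    show "code L \<in> Sigma (pivot_chains d N) (digit_tables d)"
      using \<open>L \<in> S\<close> pivot_vector_mem_pivot_chains digit_table_mem_digit_tables
      unfolding code_def S_def index_at_most_def by blast
  qed
  moreover have "finite (Sigma (pivot_chains d N) (digit_tables d))"
    using finite_pivot_chains finite_digit_tables by blast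
  ultimately have "card S \<le> card (Sigma (pivot_chains d N) (digit_tables d))"
    by (rule card_inj_on_le)
  also have "\<dots> = (\<Sum>c\<in>pivot_chains d N. card (digit_tables d c))"
    by (rule card_SigmaI) (simp_all add: finite_pivot_chains finite_digit_tables)
  also have "\<dots> \<le> (\<Sum>c\<in>pivot_chains d N. N)"
    by (rule sum_mono) (rule card_digit_tables_le)
  also have "\<dots> = card (pivot_chains d N) * N" by simp
  finally show ?thesis unfolding A_count_def S_def .
qed

lemma A_count_le_powr:
  assumes "N > 0"
  shows "real (A_count d N) \<le> real N powr (1 + (\<Sum>k<d. 1 / real (Suc k)))"
proof -
  have "real (A_count d N) \<le> real (card (pivot_chains d N) * N)"
    using A_count_le by (rule of_nat_mono)
  also have "\<dots> = real (card (pivot_chains d N)) * real N" by simp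
  also have "\<dots> \<le> real N powr (\<Sum>k<d. 1 / real (Suc k)) * real N"
    using card_pivot_chains_le[OF assms] by (simp add: mult_right_mono)
  also have "\<dots> = real N powr (1 + (\<Sum>k<d. 1 / real (Suc k)))"
    using assms by (simp add: powr_add)
  finally show ?thesis .
qed

section \<open>Counting all subgroups of bounded index\<close>

context finite_index_subgroup
begin

lemma pivot_vector_mem_box:
  assumes "card (cosets_Zd d L) \<le> N"
  shows "pivot_vector d L \<in> box_Zd d (\<lambda>_. {1..int N})"
  unfolding box_Zd_def pivot_vector_def
proof (intro CollectI conjI allI impI)
  fix i assume "i < d"
  then show "(if i < d then pivot L i else 0) \<in> {1..int N}"
    using pivot_pos[of i] pivot_le_card_cosets[of i] assms by simp
qed simp

lemma hnf_row_mem_box: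
  assumes N: "card (cosets_Zd d L) \<le> N" and k: "k < d"
  shows "hnf_row L k \<in> box_Zd d (\<lambda>_. {0..int N})"
  unfolding box_Zd_def
proof (intro CollectI conjI allI impI)
  fix i assume "i < d"
  then have "pivot L i \<le> int N" using pivot_le_card_cosets N by fastforce
  consider "i < k" | "i = k" | "k < i" by linarith
  then show "hnf_row L k i \<in> {0..int N}"
  proof cases
    case 1
    then show ?thesis using hnf_row(4)[OF k, rule_format, of i] \<open>pivot L i \<le> int N\<close> by simp
  next
    case 2
    then show ?thesis using hnf_row(3)[OF k] pivot_pos[OF k] \<open>pivot L i \<le> int N\<close> by simp
  next
    case 3
    then show ?thesis using hnf_row(2)[OF k] by simp
  qed
next
  fix i assume "d \<le> i"
  then show "hnf_row L k i = 0" using hnf_row(2)[OF k] k by simp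
qed

end

lemma finite_subgroups_index_le: "finite {L. is_subgroup_Zd d L \<and> index_at_most d L N}"
proof -
  define S where "S = {L. is_subgroup_Zd d L \<and> index_at_most d L N}"
  define code where "code L = (pivot_vector d L, restrict (hnf_row L) {..<d})" for L
  define T where "T = box_Zd d (\<lambda>_. {1..int N}) \<times> PiE {..<d} (\<lambda>_. box_Zd d (\<lambda>_. {0..int N}))"
  have L: "finite_index_subgroup d L" if "L \<in> S" for L
    using that unfolding S_def index_at_most_def
    by (simp add: finite_index_subgroup_def finite_index_subgroup_axioms_def subgroup_Zd_def)
  have "inj_on code S"
  proof
    fix L L' assume "L \<in> S" "L' \<in> S" "code L = code L'"
    then have "pivot_vector d L = pivot_vector d L'" "restrict (hnf_row L) {..<d} = restrict (hnf_row L') {..<d}"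
      unfolding code_def by simp_all
    then have "\<forall>i<d. pivot L i = pivot L' i \<and> hnf_row L i = hnf_row L' i"
      unfolding pivot_vector_def restrict_def by (metis lessThan_iff)
    then show "L = L'" using eq_if_hnf_agree L \<open>L \<in> S\<close> \<open>L' \<in> S\<close> by blast
  qed
  moreover have "code ` S \<subseteq> T"
  proof (rule image_subsetI)
    fix L assume "L \<in> S"
    then interpret finite_index_subgroup d L by (rule L)
    show "code L \<in> T"
      using \<open>L \<in> S\<close> pivot_vector_mem_box hnf_row_mem_box
      unfolding code_def T_def S_def index_at_most_def by auto
  qed
  moreover have "finite T" unfolding T_def by (intro finite_cartesian_product finite_box_Zd finite_PiE) auto
  ultimately show ?thesis unfolding S_def using inj_on_finite by blast
qed

definition congruence_subgroup :: "nat \<Rightarrow> int \<Rightarrow> (nat \<Rightarrow> int) \<Rightarrow> (nat \<Rightarrow> int) set" where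
  "congruence_subgroup d n a = {v. (\<forall>i\<ge>d. v i = 0) \<and> n dvd (\<Sum>i<d. a i * v i)}"

lemma is_subgroup_congruence_subgroup: "is_subgroup_Zd d (congruence_subgroup d n a)"
  unfolding is_subgroup_Zd_def congruence_subgroup_def Zd_def
  by (auto simp: algebra_simps sum.distrib sum_negf)

lemma sum_mult_if_zero:
  "(d::nat) > 0 \<Longrightarrow> (\<Sum>i<d. a i * (if i = 0 then t else 0)) = a 0 * (t :: int)"
  by (simp add: if_distrib cong: if_cong)

lemma index_at_most_congruence_subgroup:
  assumes n: "n > 0" and d: "d > 0" and a0: "a 0 = 1"
  shows "index_at_most d (congruence_subgroup d n a) (nat n)"
proof -
  let ?L = "congruence_subgroup d n a"
  interpret subgroup_Zd d ?L by (rule subgroup_Zd.intro, rule is_subgroup_congruence_subgroup)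
  define coset where "coset r = (\<lambda>w i. (if i = 0 then r else 0) + w i) ` ?L" for r
  have sub: "cosets_Zd d ?L \<subseteq> coset ` {0..<n}"
  proof
    fix C assume "C \<in> cosets_Zd d ?L"
    then obtain v where v: "v \<in> Zd d" "C = (\<lambda>w i. v i + w i) ` ?L" unfolding cosets_Zd_def by blast
    define r where "r = (\<Sum>i<d. a i * v i) mod n"
    have "(\<Sum>i<d. a i * (v i - (if i = 0 then r else 0))) = (\<Sum>i<d. a i * v i) - r"
      using sum_mult_if_zero[OF d, of a r] a0 by (simp add: algebra_simps sum_subtractf)
    then have "n dvd (\<Sum>i<d. a i * (v i - (if i = 0 then r else 0)))"
      unfolding r_def by (simp add: mod_eq_dvd_iff[symmetric])
    moreover have "\<forall>i\<ge>d. v i - (if i = 0 then r else 0) = 0" using v(1) d unfolding Zd_def by simp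
    ultimately have "(\<lambda>i. v i - (if i = 0 then r else 0)) \<in> ?L" unfolding congruence_subgroup_def by simp
    then have "C = coset r" unfolding v(2) coset_def by (rule cosets_eq_if_diff_mem)
    moreover have "r \<in> {0..<n}" unfolding r_def using n by simp
    ultimately show "C \<in> coset ` {0..<n}" by blast
  qed
  then have "finite (cosets_Zd d ?L)" using finite_subset by blast
  moreover have "card (cosets_Zd d ?L) \<le> card (coset ` {0..<n})" using card_mono[OF _ sub] by simp
  moreover have "card (coset ` {0..<n}) \<le> nat n" using card_image_le[of "{0..<n}" coset] by simp
  ultimately show ?thesis unfolding index_at_most_def by simp
qed

lemma congruence_subgroup_inj:
  assumes d: "d > 0" and n: "n > 0" "n' > 0"
    and a: "a \<in> box_Zd d (\<lambda>i. if i = 0 then {1} else {0..<n})"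
    and a': "a' \<in> box_Zd d (\<lambda>i. if i = 0 then {1} else {0..<n'})"
    and eq: "congruence_subgroup d n a = congruence_subgroup d n' a'"
  shows "n = n' \<and> a = a'"
proof -
  have a0: "a 0 = 1" "a' 0 = 1" using a a' d unfolding box_Zd_def by auto
  have unit_mem: "(\<lambda>i. if i = 0 then t else 0) \<in> congruence_subgroup d m b \<longleftrightarrow> m dvd t"
    if "b 0 = 1" for t m b
    using sum_mult_if_zero[OF d, of b t] that d unfolding congruence_subgroup_def by simp
  have "n dvd n'" "n' dvd n"
    using unit_mem[of a] unit_mem[of a'] a0 eq by (metis dvd_refl)+
  then have "n = n'" using n by (simp add: zdvd_antisym_nonneg)
  have "a i = a' i" for i
  proof (cases "0 < i \<and> i < d")
    case False
    then show ?thesis using a0 a a' unfolding box_Zd_def by (cases "i = 0") auto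
  next
    case True
    define w where "w j = (if j = i then 1 else if j = 0 then - a i else 0)" for j
    have sum_w: "(\<Sum>j<d. b j * w j) = b i - b 0 * a i" for b :: "nat \<Rightarrow> int"
    proof -
      have "(\<Sum>j<d. b j * w j) = (\<Sum>j<d. (if j = i then b i else 0) + (if j = 0 then - b 0 * a i else 0))"
        unfolding w_def by (rule sum.cong) (use True in auto)
      also have "\<dots> = b i - b 0 * a i" using True by (simp add: sum.distrib)
      finally show ?thesis .
    qed
    have "w \<in> congruence_subgroup d n a"
      unfolding congruence_subgroup_def using sum_w[of a] a0 True by (simp add: w_def)
    with eq have "w \<in> congruence_subgroup d n' a'" by simp
    then have "n dvd a' i - a i"
      using sum_w[of a'] a0 \<open>n = n'\<close> unfolding congruence_subgroup_def by simp
    moreover have "a i \<in> {0..<n}" "a' i \<in> {0..<n}"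
      using a a' True \<open>n = n'\<close> unfolding box_Zd_def by auto
    ultimately show ?thesis by (metis atLeastLessThan_iff mod_eq_dvd_iff mod_pos_pos_trivial)
  qed
  then show ?thesis using \<open>n = n'\<close> by auto
qed

definition congruence_parameters :: "nat \<Rightarrow> nat \<Rightarrow> nat \<Rightarrow> (int \<times> (nat \<Rightarrow> int)) set" where
  "congruence_parameters d M N =
     {int M<..int N} \<times> box_Zd d (\<lambda>i. if i = 0 then {1} else {0..<int M})"

lemma inj_on_congruence_subgroup:
  assumes d: "d > 0"
  shows "inj_on (\<lambda>(n, a). congruence_subgroup d n a) (congruence_parameters d M N)"
proof (rule inj_onI, clarify)
  fix n a n' a'
  assume "(n, a) \<in> congruence_parameters d M N" "(n', a') \<in> congruence_parameters d M N"
  then have "n > int M" "n' > int M"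
    and a: "a \<in> box_Zd d (\<lambda>i. if i = 0 then {1} else {0..<n})"
    and a': "a' \<in> box_Zd d (\<lambda>i. if i = 0 then {1} else {0..<n'})"
    unfolding congruence_parameters_def box_Zd_def by auto
  moreover assume "congruence_subgroup d n a = congruence_subgroup d n' a'"
  ultimately show "n = n' \<and> a = a'"
    using congruence_subgroup_inj[OF d _ _ a a'] by simp
qed

lemma congruence_subgroup_index_le:
  assumes d: "d > 0" and na: "(n, a) \<in> congruence_parameters d M N"
  shows "is_subgroup_Zd d (congruence_subgroup d n a) \<and> index_at_most d (congruence_subgroup d n a) N"
proof -
  have "int M < n" "n \<le> int N"
    and a: "a \<in> box_Zd d (\<lambda>i. if i = 0 then {1} else {0..<int M})"
    using na unfolding congruence_parameters_def by auto
  then have "0 < n" "nat n \<le> N" by linarith+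
  moreover have "a 0 = 1" using box_Zd_memD[OF a d] by simp
  ultimately have "index_at_most d (congruence_subgroup d n a) (nat n)"
    using index_at_most_congruence_subgroup d by blast
  then show ?thesis
    using \<open>nat n \<le> N\<close> is_subgroup_congruence_subgroup unfolding index_at_most_def by simp
qed

lemma card_congruence_parameters:
  assumes "d > 0" "M \<le> N"
  shows "card (congruence_parameters d M N) = (N - M) * M ^ (d - 1)"
proof -
  obtain e where e: "d = Suc e" using assms(1) gr0_conv_Suc by blast
  have "card (box_Zd d (\<lambda>i. if i = 0 then {1} else {0..<int M})) = M ^ e"
    unfolding card_box_Zd e prod.lessThan_Suc_shift by simp
  then show ?thesis
    using assms(2) unfolding congruence_parameters_def e
    by (simp add: card_cartesian_product flip: of_nat_diff)
qed

lemma B_count_ge: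
  assumes d: "d > 0"
  shows "(N div 2) ^ d \<le> B_count d N"
proof -
  define M where "M = N div 2"
  let ?G = "\<lambda>(n, a). congruence_subgroup d n a"
  have "?G ` congruence_parameters d M N \<subseteq> {L. is_subgroup_Zd d L \<and> index_at_most d L N}"
  proof (rule image_subsetI)
    fix x assume "x \<in> congruence_parameters d M N"
    then show "?G x \<in> {L. is_subgroup_Zd d L \<and> index_at_most d L N}"
      using congruence_subgroup_index_le[OF d, of "fst x" "snd x"] by (simp add: case_prod_beta)
  qed
  then have card_le: "card (congruence_parameters d M N) \<le> B_count d N"
    unfolding B_count_def
    by (rule card_inj_on_le[OF inj_on_congruence_subgroup[OF d] _ finite_subgroups_index_le])
  have "M ^ d = M * M ^ (d - 1)" using d by (cases d) simp_all
  also have "\<dots> \<le> (N - M) * M ^ (d - 1)" by (rule mult_le_mono1) (simp add: M_def)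
  also have "\<dots> = card (congruence_parameters d M N)"
    using card_congruence_parameters[OF d, of M N] by (simp add: M_def)
  also have "\<dots> \<le> B_count d N" by (rule card_le)
  finally show ?thesis unfolding M_def .
qed

section \<open>The density of ideal lattices\<close>

lemma sum_inverse_Suc_le:
  assumes "3 \<le> d"
  shows "(\<Sum>k<d. 1 / real (Suc k)) \<le> real d - 7 / 6"
  using assms
proof (induction d rule: nat_induct_at_least)
  case base
  then show ?case by (simp add: numeral_3_eq_3)
next
  case (Suc n)
  have "(\<Sum>k<Suc n. 1 / real (Suc k)) = (\<Sum>k<n. 1 / real (Suc k)) + 1 / real (Suc n)"
    by (rule sum.lessThan_Suc)
  moreover have "1 / real (Suc n) \<le> 1" by simp
  ultimately show ?case using Suc.IH by linarith
qed

lemma A_count_div_B_count_le: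
  assumes d: "3 \<le> d" and N: "3 \<le> N"
  shows "real (A_count d N) / real (B_count d N) \<le> 3 ^ d * real N powr (- 1 / 6)"
proof -
  have "real (A_count d N) \<le> real N powr (1 + (\<Sum>k<d. 1 / real (Suc k)))"
    using A_count_le_powr N by simp
  also have "\<dots> \<le> real N powr (real d - 1 / 6)"
    using sum_inverse_Suc_le[OF d] N by (intro powr_mono) simp_all
  finally have A: "real (A_count d N) \<le> real N powr (real d - 1 / 6)" .
  have "real N / 3 \<le> real (N div 2)" using N by linarith
  then have "(real N / 3) ^ d \<le> real (N div 2) ^ d" by (rule power_mono) simp
  also have "\<dots> \<le> real (B_count d N)"
    using B_count_ge[of d N] d by (simp flip: of_nat_power)
  finally have B: "(real N / 3) ^ d \<le> real (B_count d N)" .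
  have "real (A_count d N) / real (B_count d N) \<le> real N powr (real d - 1 / 6) / (real N / 3) ^ d"
    using A B N by (intro frac_le) simp_all
  also have "\<dots> = 3 ^ d * (real N powr (real d - 1 / 6) / real N powr real d)"
    using N by (simp add: power_divide powr_realpow)
  also have "\<dots> = 3 ^ d * real N powr (- 1 / 6)" by (simp add: powr_diff [symmetric])
  finally show ?thesis .
qed

theorem corollary4p2:
  fixes d :: nat
  assumes "d \<ge> 3"
  shows "(\<lambda>N. real (A_count d N) / real (B_count d N)) \<longlonglongrightarrow> 0"
proof (rule real_tendsto_sandwich)
  show "\<forall>\<^sub>F N in sequentially. 0 \<le> real (A_count d N) / real (B_count d N)" by simp
  show "\<forall>\<^sub>F N in sequentially. real (A_count d N) / real (B_count d N) \<le> 3 ^ d * real N powr (- 1 / 6)"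
    using eventually_ge_at_top[of "3 :: nat"]
    by (rule eventually_mono) (rule A_count_div_B_count_le[OF assms])
  show "(\<lambda>N. 0) \<longlonglongrightarrow> 0" by simp
  have "(\<lambda>N. real N powr (- 1 / 6)) \<longlonglongrightarrow> 0"
    by (rule tendsto_neg_powr) (simp_all add: filterlim_real_sequentially)
  then show "(\<lambda>N. 3 ^ d * real N powr (- 1 / 6)) \<longlonglongrightarrow> 0"
    by (rule tendsto_mult_right_zero)
qed

end
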